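(* Let $n\ge 2$ and $1\le r\le n-1$. Then the $(r+1)$-component connectivity of the $n$-dimensional dual cube is $$c\kappa_{r+1}(D_n)=rn-\frac{r(r+1)}{2}+1.$$
   Context: The $n$-dimensional dual cube $D_n$ has vertex set all $(2n-1)$-bit binary strings $u_1u_2\cdots u_{2n-1}$. Two vertices $u,v$ are adjacent iff they differ in exactly one bit position $i$, and moreover: if $1\le i\le n-1$ then $u_{2n-1}=v_{2n-1}=0$; if $n\le i\le 2n-2$ then $u_{2n-1}=v_{2n-1}=1$; (if $i=2n-1$ there is no further condition). For a non-complete graph $G$ and integer $r\ge 2$, an $r$-component cut is a set $F\subseteq V(G)$ such that $G-F$ has at least $r$ connected components, and the $r$-component connectivity $c\kappa_r(G)$ is the minimum size of an $r$-component cut of $G$. *)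

theory Defs
  imports Main
begin

text \<open>Vertices of the dual cube D_n: binary strings u_1 ... u_{2n-1}, represented as
  bool lists of length 2n-1; bit position i (1-based) is list index i-1.\<close>

definition dc_verts :: "nat \<Rightarrow> bool list set" where
  "dc_verts n = {u. length u = 2*n - 1}"

definition dc_adj :: "nat \<Rightarrow> bool list \<Rightarrow> bool list \<Rightarrow> bool" where
  "dc_adj n u v \<longleftrightarrow> u \<in> dc_verts n \<and> v \<in> dc_verts n \<and>
     (\<exists>i. 1 \<le> i \<and> i \<le> 2*n - 1 \<and> u ! (i-1) \<noteq> v ! (i-1) \<and>
          (\<forall>j. 1 \<le> j \<and> j \<le> 2*n - 1 \<and> j \<noteq> i \<longrightarrow> u ! (j-1) = v ! (j-1)) \<and>
          (1 \<le> i \<and> i \<le> n - 1 \<longrightarrow> \<not> u ! (2*n-2) \<and> \<not> v ! (2*n-2)) \<and>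
          (n \<le> i \<and> i \<le> 2*n - 2 \<longrightarrow> u ! (2*n-2) \<and> v ! (2*n-2)))"

definition reach_in :: "('a \<Rightarrow> 'a \<Rightarrow> bool) \<Rightarrow> 'a set \<Rightarrow> 'a \<Rightarrow> 'a \<Rightarrow> bool" where
  "reach_in E S = (\<lambda>x y. x \<in> S \<and> y \<in> S \<and> E x y)\<^sup>*\<^sup>*"

definition components_in :: "('a \<Rightarrow> 'a \<Rightarrow> bool) \<Rightarrow> 'a set \<Rightarrow> 'a set set" where
  "components_in E S = (\<lambda>x. {y \<in> S. reach_in E S x y}) ` S"

definition is_comp_cut :: "'a set \<Rightarrow> ('a \<Rightarrow> 'a \<Rightarrow> bool) \<Rightarrow> nat \<Rightarrow> 'a set \<Rightarrow> bool" where
  "is_comp_cut V E r F \<longleftrightarrow> F \<subseteq> V \<and> finite (components_in E (V - F)) \<and>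
      card (components_in E (V - F)) \<ge> r"

definition comp_conn :: "'a set \<Rightarrow> ('a \<Rightarrow> 'a \<Rightarrow> bool) \<Rightarrow> nat \<Rightarrow> nat" where
  "comp_conn V E r = (LEAST k. \<exists>F. is_comp_cut V E r F \<and> card F = k)"

end

theory Submission
  imports Defs
begin

text \<open>D_n splits into 2^n clusters, copies of the (n-1)-cube, joined by a perfect matching of
  cross edges.  For the upper bound, the neighbourhood of r unit vectors in one cluster has
  rn - r(r+1)/2 + 1 vertices and separates each of them from the rest.  For the lower bound, a
  smaller cut F has fewer than 2^(n-1) vertices, so it misses a cluster of each class, and all
  clusters it misses lie in one component.  The set B of vertices outside that component has at
  least r elements and its neighbourhood lies in F.  If |B| < n - 1, vertex isoperimetry in the
  (n-1)-cube bounds this neighbourhood; otherwise charging F to the clusters met by B gives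
  |F| > n(n-1)/2.\<close>

section \<open>Hypercube boundaries\<close>

definition flip_bit :: "nat \<Rightarrow> bool list \<Rightarrow> bool list" where
  "flip_bit i v = v[i := \<not> v ! i]"

lemma length_flip_bit [simp]: "length (flip_bit i v) = length v"
  by (simp add: flip_bit_def)

lemma nth_flip_bit: "i < length v \<Longrightarrow> flip_bit i v ! j = (if j = i then \<not> v ! i else v ! j)"
  by (simp add: flip_bit_def nth_list_update)

lemma flip_bit_neq: "i < length v \<Longrightarrow> flip_bit i v \<noteq> v"
  by (metis nth_flip_bit)

lemma flip_bit_flip_bit [simp]: "i < length v \<Longrightarrow> flip_bit i (flip_bit i v) = v"
  by (simp add: flip_bit_def)

lemma flip_bit_eq_iff:
  assumes "i < length v" "j < length v"
  shows "flip_bit i v = flip_bit j v \<longleftrightarrow> i = j"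
proof
  assume "flip_bit i v = flip_bit j v"
  then have "flip_bit i v ! i = flip_bit j v ! i" by simp
  then show "i = j" using assms by (auto simp: nth_flip_bit split: if_splits)
qed simp

lemma inj_on_flip_bit: "(\<And>v. v \<in> A \<Longrightarrow> i < length v) \<Longrightarrow> inj_on (flip_bit i) A"
  by (rule inj_onI) (metis flip_bit_flip_bit)

lemma flip_bit_commute: "i < length v \<Longrightarrow> j < length v \<Longrightarrow> flip_bit j (flip_bit i v) = flip_bit i (flip_bit j v)"
  by (rule nth_equalityI) (auto simp: nth_flip_bit)

definition cube_boundary :: "nat set \<Rightarrow> bool list set \<Rightarrow> bool list set" where
  "cube_boundary I S = {flip_bit i v | v i. v \<in> S \<and> i \<in> I} - S"

lemma finite_cube_boundary: "finite S \<Longrightarrow> finite I \<Longrightarrow> finite (cube_boundary I S)"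
proof -
  assume "finite S" "finite I"
  have "{flip_bit i v | v i. v \<in> S \<and> i \<in> I} = (\<lambda>(v, i). flip_bit i v) ` (S \<times> I)" by auto
  then show ?thesis using \<open>finite S\<close> \<open>finite I\<close> unfolding cube_boundary_def by simp
qed

lemma card_cube_boundary_singleton:
  assumes "I \<subseteq> {..<length v}"
  shows "card (cube_boundary I {v}) = card I"
proof -
  have "cube_boundary I {v} = (\<lambda>i. flip_bit i v) ` I"
    using assms by (auto simp: cube_boundary_def flip_bit_neq)
  moreover have "inj_on (\<lambda>i. flip_bit i v) I"
  proof (rule inj_onI)
    fix i j assume "i \<in> I" "j \<in> I" "flip_bit i v = flip_bit j v"
    then show "i = j" using assms flip_bit_eq_iff[of i v j] by auto
  qed
  ultimately show ?thesis by (simp add: card_image)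
qed

lemma card_cube_boundary_halves:
  assumes S: "finite S" "\<forall>v\<in>S. length v = L" and I: "I \<subseteq> {..<L}" and j: "j < L"
  shows "card (cube_boundary (I - {j}) {s \<in> S. \<not> s ! j}) + card (cube_boundary (I - {j}) {s \<in> S. s ! j})
           \<le> card (cube_boundary I S)"
proof -
  define H where "H c = cube_boundary (I - {j}) {s \<in> S. s ! j = c}" for c
  have side: "x ! j = c \<and> x \<in> cube_boundary I S" if x: "x \<in> H c" for x c
  proof -
    obtain s i where si: "x = flip_bit i s" "s \<in> S" "s ! j = c" "i \<in> I" "i \<noteq> j"
      "x \<notin> {s \<in> S. s ! j = c}"
      using x unfolding H_def cube_boundary_def by blast
    have "i < length s" using si(2,4) S(2) I by auto
    then have "x ! j = c" using si by (simp add: nth_flip_bit)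
    then show ?thesis using si unfolding cube_boundary_def by blast
  qed
  then have sub: "H False \<union> H True \<subseteq> cube_boundary I S" and disj: "H False \<inter> H True = {}"
    by blast+
  have fin: "finite (cube_boundary I S)"
    using S(1) I finite_cube_boundary finite_subset by blast
  have "card (H False) + card (H True) = card (H False \<union> H True)"
    using sub fin disj by (metis card_Un_disjoint finite_Un finite_subset)
  also have "\<dots> \<le> card (cube_boundary I S)"
    using sub fin by (rule card_mono[rotated])
  finally show ?thesis by (simp add: H_def)
qed

text \<open>Vertex isoperimetry, doubled to stay in nat: s \<le> k vertices have at least
  s k - s (s + 1) / 2 + 1 outer neighbours along k directions.\<close>

theorem card_cube_boundary_ge:
  assumes "finite S" "\<forall>v\<in>S. length v = L" "I \<subseteq> {..<L}" "1 \<le> card S" "card S \<le> card I"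
  shows "2 * card S * card I + 2 \<le> 2 * card (cube_boundary I S) + card S * (card S + 1)"
  using assms
proof (induction "card S" arbitrary: S I rule: less_induct)
  case less
  show ?case
  proof (cases "card S = 1")
    case True
    then obtain v where "S = {v}" by (metis card_1_singletonE)
    then show ?thesis using True less.prems card_cube_boundary_singleton[of I v] by simp
  next
    case False
    then obtain u v where uv: "u \<in> S" "v \<in> S" "u \<noteq> v"
      using card_le_Suc0_iff_eq[OF less.prems(1)] less.prems(4) by force
    then obtain j where j: "j < L" "u ! j \<noteq> v ! j"
      using less.prems(2) nth_equalityI[of u v] by auto
    define S0 where "S0 = {s \<in> S. \<not> s ! j}"
    define S1 where "S1 = {s \<in> S. s ! j}"
    have "S = S0 \<union> S1" "S0 \<inter> S1 = {}" by (auto simp: S0_def S1_def)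
    then have card_S: "card S = card S0 + card S1"
      using less.prems(1) card_Un_disjoint by (metis finite_Un)
    have "S0 \<noteq> {}" "S1 \<noteq> {}" using uv j by (auto simp: S0_def S1_def)
    then have pos: "1 \<le> card S0" "1 \<le> card S1"
      using less.prems(1) by (auto simp: S0_def S1_def Suc_le_eq card_gt_0_iff)
    have "finite I" using less.prems(3) finite_subset by blast
    then have card_I: "card I \<le> card (I - {j}) + 1"
      by (cases "j \<in> I") (auto simp: card_Diff_singleton_if card_gt_0_iff)
    have IH: "2 * card S' * card (I - {j}) + 2 \<le> 2 * card (cube_boundary (I - {j}) S') + card S' * (card S' + 1)"
      if "S' \<subseteq> S" "card S' < card S" "1 \<le> card S'" "card S' \<le> card (I - {j})" for S'
    proof (rule less.hyps)
      show "finite S'" using that(1) less.prems(1) finite_subset by blast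
    qed (use that less.prems in auto)
    have IH0: "2 * card S0 * card (I - {j}) + 2 \<le> 2 * card (cube_boundary (I - {j}) S0) + card S0 * (card S0 + 1)"
      and IH1: "2 * card S1 * card (I - {j}) + 2 \<le> 2 * card (cube_boundary (I - {j}) S1) + card S1 * (card S1 + 1)"
      using card_S pos card_I less.prems(5) by (intro IH; simp add: S0_def S1_def; linarith)+
    have "card (cube_boundary (I - {j}) S0) + card (cube_boundary (I - {j}) S1) \<le> card (cube_boundary I S)"
      unfolding S0_def S1_def using less.prems j by (intro card_cube_boundary_halves) auto
    moreover have "card S0 + card S1 \<le> card S0 * card S1 + 1"
      using pos by (cases "card S0"; cases "card S1") auto
    moreover have "card S * card I \<le> card S * card (I - {j}) + card S"
      using mult_le_mono2[OF card_I, of "card S"] by simp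
    moreover have "card S * card (I - {j}) = card S0 * card (I - {j}) + card S1 * card (I - {j})"
      "card S * (card S + 1) = card S0 * (card S0 + 1) + card S1 * (card S1 + 1) + 2 * (card S0 * card S1)"
      using card_S by (simp_all add: algebra_simps)
    ultimately show ?thesis
      using IH0 IH1 card_S by (simp (no_asm_use) only: mult.assoc; linarith)
  qed
qed

lemma card_closed_cube_nbhd_mono:
  assumes "Y \<subseteq> S" "finite S" "finite I"
  shows "card Y + card (cube_boundary I Y) \<le> card S + card (cube_boundary I S)"
proof -
  have fin: "finite Y" "finite (cube_boundary I Y)" "finite (cube_boundary I S)"
    using assms finite_subset finite_cube_boundary by blast+
  have "Y \<union> cube_boundary I Y \<subseteq> S \<union> cube_boundary I S"
    using assms(1) by (auto simp: cube_boundary_def)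
  then have "card (Y \<union> cube_boundary I Y) \<le> card (S \<union> cube_boundary I S)"
    using fin assms(2) by (simp add: card_mono)
  moreover have "Y \<inter> cube_boundary I Y = {}" "S \<inter> cube_boundary I S = {}"
    by (auto simp: cube_boundary_def)
  ultimately show ?thesis using fin assms(2) by (simp add: card_Un_disjoint)
qed

section \<open>Clusters of the dual cube\<close>

text \<open>A vertex of D_n is x @ y @ [c] with |x| = |y| = n - 1.  Edges inside class c
  change a bit of x (c false) or of y (c true); these "cluster" edges form a copy of the
  (n-1)-cube on the vertices sharing c and the other half.  The cross edge flips c.\<close>

definition cluster_dirs :: "nat \<Rightarrow> bool \<Rightarrow> nat set" where
  "cluster_dirs n c = (if c then {n-1..<2*n-2} else {..<n-1})"

definition cluster :: "nat \<Rightarrow> bool list \<Rightarrow> bool \<times> bool list" where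
  "cluster n v = (v ! (2*n-2), if v ! (2*n-2) then take (n-1) v else take (n-1) (drop (n-1) v))"

lemma cluster_dirs_subset: "cluster_dirs n c \<subseteq> {..<2*n-2}"
  by (auto simp: cluster_dirs_def)

lemma card_cluster_dirs: "n \<ge> 2 \<Longrightarrow> card (cluster_dirs n c) = n - 1"
  by (auto simp: cluster_dirs_def)

lemma finite_dc_verts: "finite (dc_verts n)"
proof -
  have "dc_verts n = {xs. set xs \<subseteq> UNIV \<and> length xs = 2*n-1}" by (auto simp: dc_verts_def)
  then show ?thesis using finite_lists_length_eq[of "UNIV :: bool set"] by simp
qed

lemma dc_adj_imp_flip_bit:
  assumes n: "n \<ge> 2" and adj: "dc_adj n u v"
  shows "length u = 2*n-1 \<and> (v = flip_bit (2*n-2) u \<or> (\<exists>i\<in>cluster_dirs n (u ! (2*n-2)). v = flip_bit i u))"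
proof -
  have lu: "length u = 2*n-1" and lv: "length v = 2*n-1" using adj by (auto simp: dc_adj_def dc_verts_def)
  from adj obtain i where i: "1 \<le> i" "i \<le> 2*n-1" "u ! (i-1) \<noteq> v ! (i-1)"
    and others: "\<forall>j. 1 \<le> j \<and> j \<le> 2*n - 1 \<and> j \<noteq> i \<longrightarrow> u ! (j-1) = v ! (j-1)"
    and class0: "1 \<le> i \<and> i \<le> n - 1 \<longrightarrow> \<not> u ! (2*n-2) \<and> \<not> v ! (2*n-2)"
    and class1: "n \<le> i \<and> i \<le> 2*n - 2 \<longrightarrow> u ! (2*n-2) \<and> v ! (2*n-2)"
    unfolding dc_adj_def by blast
  have v: "v = flip_bit (i-1) u"
  proof (rule nth_equalityI)
    fix j assume "j < length v"
    then show "v ! j = flip_bit (i-1) u ! j"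
      using i lu lv others[rule_format, of "j+1"] by (cases "j = i - 1") (auto simp: nth_flip_bit)
  qed (use lu lv in simp)
  have "i - 1 = 2*n-2 \<or> i - 1 \<in> cluster_dirs n (u ! (2*n-2))"
    using i class0 class1 by (cases "i \<le> n - 1") (auto simp: cluster_dirs_def)
  then show ?thesis using v lu by auto
qed

lemma dc_adj_flip_bit:
  assumes n: "n \<ge> 2" and u: "length u = 2*n-1"
    and i: "i = 2*n-2 \<or> i \<in> cluster_dirs n (u ! (2*n-2))"
  shows "dc_adj n u (flip_bit i u)"
proof -
  define v where "v = flip_bit i u"
  have i_less: "i < 2*n-1" using i n cluster_dirs_subset by fastforce
  have same_class: "i \<noteq> 2*n-2 \<Longrightarrow> v ! (2*n-2) = u ! (2*n-2)"
    using u n i_less by (auto simp: v_def nth_flip_bit)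
  have "dc_adj n u v"
    unfolding dc_adj_def
  proof (intro conjI exI[of _ "i+1"])
    show "u \<in> dc_verts n" "v \<in> dc_verts n" using u by (auto simp: dc_verts_def v_def)
    show "1 \<le> i + 1" "i + 1 \<le> 2*n-1" using i_less by auto
    show "u ! (i + 1 - 1) \<noteq> v ! (i + 1 - 1)" using u i_less by (simp add: v_def nth_flip_bit)
    show "\<forall>j. 1 \<le> j \<and> j \<le> 2 * n - 1 \<and> j \<noteq> i + 1 \<longrightarrow> u ! (j - 1) = v ! (j - 1)"
      using u i_less by (auto simp: v_def nth_flip_bit)
    show "1 \<le> i + 1 \<and> i + 1 \<le> n - 1 \<longrightarrow> \<not> u ! (2 * n - 2) \<and> \<not> v ! (2 * n - 2)"
      using i same_class n by (cases "i = 2*n-2") (auto simp: cluster_dirs_def split: if_splits)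
    show "n \<le> i + 1 \<and> i + 1 \<le> 2 * n - 2 \<longrightarrow> u ! (2 * n - 2) \<and> v ! (2 * n - 2)"
      using i same_class n by (cases "i = 2*n-2") (auto simp: cluster_dirs_def split: if_splits)
  qed
  then show ?thesis by (simp add: v_def)
qed

lemma dc_adj_iff:
  assumes n: "n \<ge> 2"
  shows "dc_adj n u v \<longleftrightarrow> length u = 2*n-1 \<and>
     (v = flip_bit (2*n-2) u \<or> (\<exists>i\<in>cluster_dirs n (u ! (2*n-2)). v = flip_bit i u))"
  using dc_adj_imp_flip_bit[OF n] dc_adj_flip_bit[OF n] by blast

lemma dc_adj_sym:
  assumes "dc_adj n u v"
  shows "dc_adj n v u"
proof -
  obtain i where "1 \<le> i \<and> i \<le> 2*n - 1 \<and> u ! (i-1) \<noteq> v ! (i-1) \<and>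
          (\<forall>j. 1 \<le> j \<and> j \<le> 2*n - 1 \<and> j \<noteq> i \<longrightarrow> u ! (j-1) = v ! (j-1)) \<and>
          (1 \<le> i \<and> i \<le> n - 1 \<longrightarrow> \<not> u ! (2*n-2) \<and> \<not> v ! (2*n-2)) \<and>
          (n \<le> i \<and> i \<le> 2*n - 2 \<longrightarrow> u ! (2*n-2) \<and> v ! (2*n-2))"
    using assms unfolding dc_adj_def by blast
  then show ?thesis using assms unfolding dc_adj_def by (intro conjI exI[of _ i]) auto
qed

lemma dc_adj_verts: "dc_adj n u v \<Longrightarrow> v \<in> dc_verts n"
  by (simp add: dc_adj_def)

lemma cluster_flip_bit:
  assumes n: "n \<ge> 2" and v: "length v = 2*n-1" and i: "i \<in> cluster_dirs n (v ! (2*n-2))"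
  shows "cluster n (flip_bit i v) = cluster n v" "flip_bit i v ! (2*n-2) = v ! (2*n-2)"
proof -
  have "i < 2*n-2" using i cluster_dirs_subset by blast
  then show last_bit: "flip_bit i v ! (2*n-2) = v ! (2*n-2)" using v by (simp add: nth_flip_bit)
  show "cluster n (flip_bit i v) = cluster n v"
    using i last_bit by (cases "v ! (2*n-2)") (simp_all add: cluster_def cluster_dirs_def flip_bit_def)
qed

lemma nth_eq_if_cluster_eq:
  assumes n: "n \<ge> 2" and uv: "length u = 2*n-1" "length v = 2*n-1" "cluster n u = cluster n v"
    and j: "j < 2*n-1" "j \<notin> cluster_dirs n (u ! (2*n-2))"
  shows "u ! j = v ! j"
proof -
  have last_bit: "u ! (2*n-2) = v ! (2*n-2)" using uv(3) by (simp add: cluster_def)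
  consider "j = 2*n-2" | "u ! (2*n-2)" "j < n - 1" | "\<not> u ! (2*n-2)" "n - 1 \<le> j" "j - (n-1) < n - 1"
    using j n by (cases "j = 2*n-2"; cases "u ! (2*n-2)") (auto simp: cluster_dirs_def)
  then show ?thesis
  proof cases
    case 2
    then have "take (n-1) u = take (n-1) v" using uv(3) last_bit by (simp add: cluster_def)
    then show ?thesis using 2 by (metis nth_take)
  next
    case 3
    then have "take (n-1) (drop (n-1) u) = take (n-1) (drop (n-1) v)" using uv(3) last_bit by (simp add: cluster_def)
    then have "drop (n-1) u ! (j - (n-1)) = drop (n-1) v ! (j - (n-1))" using 3 by (metis nth_take)
    then show ?thesis using 3 uv j by simp
  qed (use last_bit in simp)
qed

lemma eq_if_clusters_eq:
  assumes n: "n \<ge> 2" and uv: "length u = 2*n-1" "length v = 2*n-1" "cluster n u = cluster n v"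
    and cross: "cluster n (flip_bit (2*n-2) u) = cluster n (flip_bit (2*n-2) v)"
  shows "u = v"
proof (rule nth_equalityI)
  fix j assume "j < length u"
  then have j: "j < 2*n-1" using uv by simp
  show "u ! j = v ! j"
  proof (cases "j \<in> cluster_dirs n (u ! (2*n-2))")
    case False then show ?thesis using nth_eq_if_cluster_eq[OF n uv j] by simp
  next
    case True
    have "flip_bit (2*n-2) u ! (2*n-2) = (\<not> u ! (2*n-2))" using uv n by (simp add: nth_flip_bit)
    then have "j \<notin> cluster_dirs n (flip_bit (2*n-2) u ! (2*n-2))" using True n by (auto simp: cluster_dirs_def)
    then have "flip_bit (2*n-2) u ! j = flip_bit (2*n-2) v ! j"
      using nth_eq_if_cluster_eq[OF n _ _ cross j(1)] uv by simp
    moreover have "j \<noteq> 2*n-2" using True cluster_dirs_subset by blast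
    ultimately show ?thesis using uv j by (simp add: nth_flip_bit)
  qed
qed (use uv in simp)

lemma fst_cluster_cross:
  "n \<ge> 2 \<Longrightarrow> length v = 2*n-1 \<Longrightarrow> fst (cluster n (flip_bit (2*n-2) v)) = (\<not> fst (cluster n v))"
  by (simp add: cluster_def nth_flip_bit)

lemma cluster_append:
  assumes n: "n \<ge> 2" and x: "length x = n - 1" and y: "length y = n - 1"
  shows "cluster n (x @ y @ [c]) = (c, if c then x else y)"
    and "x @ y @ [c] \<in> dc_verts n"
    and "flip_bit (2*n-2) (x @ y @ [c]) = x @ y @ [\<not> c]"
proof -
  have i: "2*n-2 = length x + length y" using x y n by simp
  have last_bit: "(x @ y @ [c]) ! (2*n-2) = c" unfolding i by (simp add: nth_append)
  show "cluster n (x @ y @ [c]) = (c, if c then x else y)" using last_bit x y by (simp add: cluster_def)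
  show "x @ y @ [c] \<in> dc_verts n" using x y n by (simp add: dc_verts_def)
  show "flip_bit (2*n-2) (x @ y @ [c]) = x @ y @ [\<not> c]"
    unfolding flip_bit_def last_bit unfolding i by (simp add: list_update_append)
qed

section \<open>Neighbourhoods in the dual cube\<close>

definition dc_boundary :: "nat \<Rightarrow> bool list set \<Rightarrow> bool list set" where
  "dc_boundary n B = {w. \<exists>v\<in>B. dc_adj n v w} - B"

lemma finite_dc_boundary: "finite (dc_boundary n B)"
proof -
  have "dc_boundary n B \<subseteq> dc_verts n" by (auto simp: dc_boundary_def dc_adj_def)
  then show ?thesis using finite_dc_verts finite_subset by blast
qed

lemma cube_boundary_class_subset:
  assumes n: "n \<ge> 2" and B: "B \<subseteq> dc_verts n"
  shows "cube_boundary (cluster_dirs n c) {v \<in> B. v ! (2*n-2) = c} \<subseteq> dc_boundary n B \<inter> {x. x ! (2*n-2) = c}"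
proof
  fix x assume "x \<in> cube_boundary (cluster_dirs n c) {v \<in> B. v ! (2*n-2) = c}"
  then obtain v i where x: "x = flip_bit i v" "v \<in> B" "v ! (2*n-2) = c" "i \<in> cluster_dirs n c"
      "x \<notin> {v \<in> B. v ! (2*n-2) = c}"
    by (auto simp: cube_boundary_def)
  have "length v = 2*n-1" using x B by (auto simp: dc_verts_def)
  then have "dc_adj n v x" "x ! (2*n-2) = c"
    using x dc_adj_iff[OF n] cluster_flip_bit(2)[OF n] by auto
  then show "x \<in> dc_boundary n B \<inter> {x. x ! (2*n-2) = c}" using x by (auto simp: dc_boundary_def)
qed

lemma card_cube_boundary_cluster_dirs:
  assumes n: "n \<ge> 2" and B: "B \<subseteq> dc_verts n" "1 \<le> card B" "card B \<le> n - 1"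
  shows "2 * card B * (n-1) + 2 \<le> 2 * card (cube_boundary (cluster_dirs n c) B) + card B * (card B + 1)"
proof -
  have "finite B" using B(1) finite_dc_verts finite_subset by blast
  moreover have "\<forall>v\<in>B. length v = 2*n-1" using B(1) by (auto simp: dc_verts_def)
  moreover have "cluster_dirs n c \<subseteq> {..<2*n-1}" using cluster_dirs_subset by fastforce
  ultimately show ?thesis
    using card_cube_boundary_ge[of B "2*n-1" "cluster_dirs n c"] B card_cluster_dirs[OF n] by simp
qed

lemma cross_image_subset_dc_boundary:
  assumes n: "n \<ge> 2" and B: "B \<subseteq> dc_verts n" "\<forall>v\<in>B. v ! (2*n-2) = c"
  shows "flip_bit (2*n-2) ` B \<subseteq> dc_boundary n B \<inter> {x. x ! (2*n-2) = (\<not> c)}"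
    and "card (flip_bit (2*n-2) ` B) = card B"
proof -
  have len: "length v = 2*n-1" "2*n-2 < length v" if "v \<in> B" for v
    using that B(1) n by (auto simp: dc_verts_def)
  show "flip_bit (2*n-2) ` B \<subseteq> dc_boundary n B \<inter> {x. x ! (2*n-2) = (\<not> c)}"
  proof
    fix x assume "x \<in> flip_bit (2*n-2) ` B"
    then obtain v where v: "v \<in> B" "x = flip_bit (2*n-2) v" by blast
    then have "dc_adj n v x" "x ! (2*n-2) = (\<not> c)"
      using len[OF v(1)] B(2) dc_adj_iff[OF n] by (auto simp: nth_flip_bit)
    then show "x \<in> dc_boundary n B \<inter> {x. x ! (2*n-2) = (\<not> c)}"
      using v B(2) by (auto simp: dc_boundary_def)
  qed
  have "inj_on (flip_bit (2*n-2)) B" using len(2) by (rule inj_on_flip_bit)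
  then show "card (flip_bit (2*n-2) ` B) = card B" by (rule card_image)
qed

lemma card_add_le_dc_boundary:
  assumes "X \<subseteq> dc_boundary n B \<inter> {x. x ! (2*n-2) = c}" "Y \<subseteq> dc_boundary n B \<inter> {x. x ! (2*n-2) = (\<not> c)}"
  shows "card X + card Y \<le> card (dc_boundary n B)"
proof -
  have "X \<inter> Y = {}" "X \<union> Y \<subseteq> dc_boundary n B" using assms by auto
  moreover have "finite X" "finite Y" using assms finite_dc_boundary finite_subset by blast+
  ultimately show ?thesis using card_mono[OF finite_dc_boundary] by (simp add: card_Un_disjoint[symmetric])
qed

lemma card_dc_boundary_one_class:
  assumes n: "n \<ge> 2" and B: "B \<subseteq> dc_verts n" "\<forall>v\<in>B. v ! (2*n-2) = c" and k: "1 \<le> card B" "card B \<le> n - 1"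
  shows "2 * card B * n + 2 \<le> 2 * card (dc_boundary n B) + card B * (card B + 1)"
proof -
  have "{v \<in> B. v ! (2*n-2) = c} = B" using B(2) by auto
  then have "card (cube_boundary (cluster_dirs n c) B) + card (flip_bit (2*n-2) ` B) \<le> card (dc_boundary n B)"
    using cube_boundary_class_subset[OF n B(1), of c] cross_image_subset_dc_boundary(1)[OF n B]
    by (intro card_add_le_dc_boundary[where c=c]) simp_all
  moreover have "card (flip_bit (2*n-2) ` B) = card B"
    by (rule cross_image_subset_dc_boundary(2)[OF n B])
  moreover have "2 * card B * (n-1) + 2 \<le> 2 * card (cube_boundary (cluster_dirs n c) B) + card B * (card B + 1)"
    using card_cube_boundary_cluster_dirs[OF n B(1) k] .
  moreover have "card B * n = card B * (n - 1) + card B" using n by (cases n) auto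
  ultimately show ?thesis by linarith
qed

theorem card_dc_boundary_small:
  assumes n: "n \<ge> 2" and B: "B \<subseteq> dc_verts n" and k: "1 \<le> card B" "card B \<le> n - 1"
  shows "2 * card B * n + 2 \<le> 2 * card (dc_boundary n B) + card B * (card B + 1)"
proof (cases "\<exists>c. \<forall>v\<in>B. v ! (2*n-2) = c")
  case True
  then show ?thesis using card_dc_boundary_one_class[OF n B _ k] by blast
next
  case False
  have fin: "finite B" using B finite_dc_verts finite_subset by blast
  define C where "C c = {v \<in> B. v ! (2*n-2) = c}" for c
  define N where "N c = cube_boundary (cluster_dirs n c) (C c)" for c
  have card_B: "card B = card (C False) + card (C True)"
  proof -
    have "B = C False \<union> C True" "C False \<inter> C True = {}" by (auto simp: C_def)
    then show ?thesis using fin card_Un_disjoint by (metis finite_Un)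
  qed
  have "C c \<noteq> {}" for c using False by (cases c) (auto simp: C_def)
  then have pos: "1 \<le> card (C c)" for c
    using fin by (auto simp: C_def Suc_le_eq card_gt_0_iff)
  then have small: "card (C c) \<le> n - 1" for c using card_B k by (cases c) auto
  have C_verts: "C c \<subseteq> dc_verts n" for c using B by (auto simp: C_def)
  have cube: "2 * card (C c) * (n-1) + 2 \<le> 2 * card (N c) + card (C c) * (card (C c) + 1)" for c
    unfolding N_def using card_cube_boundary_cluster_dirs[OF n C_verts pos small] .
  have "card (N False) + card (N True) \<le> card (dc_boundary n B)"
  proof (rule card_add_le_dc_boundary[where c=False])
    show "N False \<subseteq> dc_boundary n B \<inter> {x. x ! (2*n-2) = False}"
      "N True \<subseteq> dc_boundary n B \<inter> {x. x ! (2*n-2) = (\<not> False)}"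
      unfolding N_def C_def
      using cube_boundary_class_subset[OF n B, of False] cube_boundary_class_subset[OF n B, of True]
      by simp_all
  qed
  moreover have "card (C False) + card (C True) \<le> card (C False) * card (C True) + 1"
    using pos[of False] pos[of True] by (cases "card (C False)"; cases "card (C True)") auto
  moreover have "card B * n = card (C False) * (n - 1) + card (C True) * (n-1) + card (C False) + card (C True)"
    using n card_B by (cases n) (auto simp: algebra_simps)
  moreover have "card B * (card B + 1) = card (C False) * (card (C False) + 1)
      + card (C True) * (card (C True) + 1) + 2 * (card (C False) * card (C True))"
    using card_B by (simp add: algebra_simps)
  ultimately show ?thesis using cube[of False] cube[of True] by (simp (no_asm_use) only: mult.assoc; linarith)
qed

text \<open>The final count of the charging argument below: K is the set of clusters met by B,
  and z k and c k are the number of vertices of B in k and the charge of k.\<close>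

lemma sum_charges_lower_bound:
  fixes z c :: "'k \<Rightarrow> nat"
  assumes m: "1 \<le> m" and K: "finite K" "K \<noteq> {}"
    and c_ge: "\<And>k. k \<in> K \<Longrightarrow> m \<le> c k"
    and c_ge': "\<And>k. k \<in> K \<Longrightarrow> int m + 4 + int (z k) * int m \<le> 2 * int (c k) + 2 * int (card K)"
    and sum_z: "m \<le> (\<Sum>k\<in>K. z k)"
  shows "m * (m + 1) + 2 \<le> 2 * (\<Sum>k\<in>K. c k)"
proof -
  define t where "t = card K"
  have t: "1 \<le> t" using K by (simp add: t_def Suc_le_eq card_gt_0_iff)
  have "t * m \<le> (\<Sum>k\<in>K. c k)"
    using sum_mono[of K "\<lambda>_. m" c] c_ge by (simp add: t_def)
  show ?thesis
  proof (cases "m * (m + 1) + 2 \<le> 2 * t * m")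
    case True
    then show ?thesis using \<open>t * m \<le> (\<Sum>k\<in>K. c k)\<close> by linarith
  next
    case False
    have "2 * t \<le> m + 2"
    proof (rule ccontr)
      assume "\<not> 2 * t \<le> m + 2"
      then have "(m + 3) * m \<le> 2 * t * m" by (intro mult_right_mono) auto
      then show False using False m by (simp add: algebra_simps)
    qed
    have "(\<Sum>k\<in>K. int m + 4 + int (z k) * int m) \<le> (\<Sum>k\<in>K. 2 * int (c k) + 2 * int t)"
      using c_ge' by (intro sum_mono) (simp add: t_def)
    then have "int t * (int m + 4) + int (\<Sum>k\<in>K. z k) * int m \<le> 2 * int (\<Sum>k\<in>K. c k) + 2 * int t * int t"
      by (simp add: sum.distrib sum_distrib_right sum_distrib_left t_def algebra_simps)
    moreover have "int m * int m \<le> int (\<Sum>k\<in>K. z k) * int m"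
      using mult_right_mono[OF sum_z[folded of_nat_le_iff[where 'a=int]], of "int m"] by simp
    moreover have "0 \<le> (int t - 1) * (int m + 2 - 2 * int t)"
      using t \<open>2 * t \<le> m + 2\<close> by (intro mult_nonneg_nonneg) auto
    ultimately have "int (m * (m + 1) + 2) \<le> int (2 * (\<Sum>k\<in>K. c k))"
      by (simp add: algebra_simps)
    then show ?thesis by (simp only: of_nat_le_iff)
  qed
qed

text \<open>Charging F to the clusters met by B: a cluster k receives the vertices of F in k
  and the cross neighbours of B \<inter> k lying in F in clusters not met by B.\<close>

locale dc_enclosed =
  fixes n :: nat and F B :: "bool list set"
  assumes n: "n \<ge> 2" and finite_F: "finite F" and B_verts: "B \<subseteq> dc_verts n"
    and boundary_subset: "dc_boundary n B \<subseteq> F"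
    and clusters_met: "cluster n ` B \<subseteq> cluster n ` F"
begin

definition part :: "bool \<times> bool list \<Rightarrow> bool list set" where
  "part k = {v \<in> B. cluster n v = k}"

definition F_part :: "bool \<times> bool list \<Rightarrow> bool list set" where
  "F_part k = {v \<in> F. cluster n v = k}"

definition escaped :: "bool \<times> bool list \<Rightarrow> bool list set" where
  "escaped k = (flip_bit (2*n-2) ` part k \<inter> F) - {p. cluster n p \<in> cluster n ` B}"

definition charge :: "bool \<times> bool list \<Rightarrow> nat" where
  "charge k = card (F_part k) + card (escaped k)"

lemma finite_B: "finite B"
  using B_verts finite_dc_verts finite_subset by blast

lemma length_B: "v \<in> B \<Longrightarrow> length v = 2*n-1"
  using B_verts by (auto simp: dc_verts_def)

lemma adj_B: "v \<in> B \<Longrightarrow> dc_adj n v w \<Longrightarrow> w \<in> F \<or> w \<in> B"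
  using boundary_subset by (auto simp: dc_boundary_def)

lemma finite_part: "finite (part k)"
  using finite_B by (simp add: part_def)

lemma finite_F_part: "finite (F_part k)"
  using finite_F by (simp add: F_part_def)

lemma finite_escaped: "finite (escaped k)"
  using finite_F by (simp add: escaped_def)

lemma card_part_pos: "k \<in> cluster n ` B \<Longrightarrow> 1 \<le> card (part k)"
  using finite_part by (auto simp: part_def Suc_le_eq card_gt_0_iff)

lemma charge_pos: "k \<in> cluster n ` B \<Longrightarrow> 1 \<le> charge k"
proof -
  assume "k \<in> cluster n ` B"
  then have "F_part k \<noteq> {}" using clusters_met by (force simp: F_part_def)
  then show ?thesis using finite_F_part by (simp add: charge_def Suc_le_eq card_gt_0_iff)
qed

lemma cube_boundary_part_subset: "cube_boundary (cluster_dirs n (fst k)) (part k) \<subseteq> F_part k"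
proof
  fix x assume "x \<in> cube_boundary (cluster_dirs n (fst k)) (part k)"
  then obtain v i where x: "x = flip_bit i v" "v \<in> B" "cluster n v = k"
      "i \<in> cluster_dirs n (fst k)" "x \<notin> part k"
    by (auto simp: cube_boundary_def part_def)
  have i: "i \<in> cluster_dirs n (v ! (2*n-2))" using x by (auto simp: cluster_def)
  have "dc_adj n v x" "cluster n x = k"
    using x i dc_adj_iff[OF n] cluster_flip_bit(1)[OF n length_B[OF x(2)] i] length_B[OF x(2)] by auto
  then show "x \<in> F_part k" using x adj_B by (auto simp: F_part_def part_def)
qed

text \<open>Cross neighbours of B \<inter> k lie in pairwise distinct clusters, none of them k; those
  not escaped lie in other clusters met by B.\<close>

lemma card_part_le:
  assumes k: "k \<in> cluster n ` B"
  shows "card (part k) \<le> card (escaped k) + (card (cluster n ` B) - 1)"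
proof -
  define X where "X = flip_bit (2*n-2) ` part k"
  have inj: "inj_on (flip_bit (2*n-2)) (part k)"
    using length_B n by (intro inj_on_flip_bit) (auto simp: part_def)
  have escaped_sub: "escaped k \<subseteq> X" by (auto simp: escaped_def X_def)
  have "inj_on (cluster n) (X - escaped k)"
  proof (rule inj_onI)
    fix p q assume p: "p \<in> X - escaped k" and q: "q \<in> X - escaped k" and eq: "cluster n p = cluster n q"
    obtain u v where u: "u \<in> part k" "p = flip_bit (2*n-2) u" and v: "v \<in> part k" "q = flip_bit (2*n-2) v"
      using p q by (auto simp: X_def)
    have "length u = 2*n-1" "length v = 2*n-1" "cluster n u = cluster n v"
      using u v length_B by (auto simp: part_def)
    then have "u = v" using eq_if_clusters_eq[OF n] eq u v by simp
    then show "p = q" using u v by simp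
  qed
  moreover have "cluster n ` (X - escaped k) \<subseteq> cluster n ` B - {k}"
  proof
    fix y assume "y \<in> cluster n ` (X - escaped k)"
    then obtain p u where p: "y = cluster n p" "p \<in> X - escaped k" "p = flip_bit (2*n-2) u" "u \<in> part k"
      by (auto simp: X_def)
    have u: "u \<in> B" "cluster n u = k" "length u = 2*n-1" using p length_B by (auto simp: part_def)
    have "dc_adj n u p" using p(3) u(3) dc_adj_iff[OF n] by simp
    then have "p \<in> F \<or> p \<in> B" using adj_B u(1) by blast
    then have "cluster n p \<in> cluster n ` B" using p by (auto simp: escaped_def X_def)
    moreover have "cluster n p \<noteq> k" using fst_cluster_cross[OF n u(3)] p(3) u(2) by auto
    ultimately show "y \<in> cluster n ` B - {k}" using p(1) by simp
  qed
  ultimately have "card (X - escaped k) \<le> card (cluster n ` B) - 1"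
    using k finite_B by (metis card_Diff_singleton card_image card_mono finite_Diff finite_imageI)
  moreover have "card X = card (part k)" using inj by (simp add: X_def card_image)
  moreover have "card X \<le> card (escaped k) + card (X - escaped k)"
    using card_Un_le[of "escaped k" "X - escaped k"] escaped_sub by (simp add: Un_absorb1)
  ultimately show ?thesis by linarith
qed

lemma sum_card_part: "(\<Sum>k\<in>cluster n ` B. card (part k)) = card B"
proof -
  have "B = (\<Union>k\<in>cluster n ` B. part k)" by (auto simp: part_def)
  moreover have "card (\<Union>k\<in>cluster n ` B. part k) = (\<Sum>k\<in>cluster n ` B. card (part k))"
    using finite_B finite_part by (intro card_UN_disjoint) (auto simp: part_def)
  ultimately show ?thesis by simp
qed

lemma sum_charge_le: "(\<Sum>k\<in>cluster n ` B. charge k) \<le> card F"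
proof -
  define W where "W k = F_part k \<union> escaped k" for k
  have card_W: "card (W k) = charge k" if "k \<in> cluster n ` B" for k
  proof -
    have "F_part k \<inter> escaped k = {}" using that by (auto simp: F_part_def escaped_def)
    then show ?thesis using finite_F_part finite_escaped by (simp add: W_def charge_def card_Un_disjoint)
  qed
  have disj: "W i \<inter> W j = {}" if "i \<in> cluster n ` B" "j \<in> cluster n ` B" "i \<noteq> j" for i j
  proof (rule ccontr)
    assume "W i \<inter> W j \<noteq> {}"
    then obtain x where "x \<in> W i" "x \<in> W j" by blast
    then have "x \<in> escaped i" "x \<in> escaped j" using that by (auto simp: W_def F_part_def escaped_def)
    then obtain u v where u: "u \<in> part i" "x = flip_bit (2*n-2) u" and v: "v \<in> part j" "x = flip_bit (2*n-2) v"
      by (auto simp: escaped_def)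
    have "inj_on (flip_bit (2*n-2)) B" using length_B n by (intro inj_on_flip_bit) auto
    then have "u = v" using u v by (auto simp: part_def inj_on_def)
    then show False using u v that by (auto simp: part_def)
  qed
  have "(\<Sum>k\<in>cluster n ` B. charge k) = card (\<Union>k\<in>cluster n ` B. W k)"
    using finite_B finite_F_part finite_escaped disj card_W
    by (subst card_UN_disjoint) (auto simp: W_def)
  also have "\<dots> \<le> card F"
    using finite_F by (intro card_mono) (auto simp: W_def F_part_def escaped_def)
  finally show ?thesis .
qed

lemma large_part_bound:
  assumes k: "k \<in> cluster n ` B" and large: "n - 1 \<le> card (part k)"
  shows "(n-1) * n + 2 \<le> 2 * (charge k + (card (cluster n ` B) - 1))"
proof -
  obtain Y where Y: "Y \<subseteq> part k" "card Y = n - 1" using obtain_subset_with_card_n[OF large] by metis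
  have Y_verts: "Y \<subseteq> dc_verts n" using Y(1) B_verts by (auto simp: part_def)
  have "2 * (n-1) * (n-1) + 2 \<le> 2 * card (cube_boundary (cluster_dirs n (fst k)) Y) + (n-1) * (n - 1 + 1)"
    using card_cube_boundary_cluster_dirs[OF n Y_verts] Y(2) n by simp
  moreover have "card Y + card (cube_boundary (cluster_dirs n (fst k)) Y)
      \<le> card (part k) + card (cube_boundary (cluster_dirs n (fst k)) (part k))"
    using Y(1) finite_part by (rule card_closed_cube_nbhd_mono) (simp add: cluster_dirs_def)
  moreover have "card (cube_boundary (cluster_dirs n (fst k)) (part k)) \<le> card (F_part k)"
    using cube_boundary_part_subset finite_F_part by (rule card_mono[rotated])
  moreover have "(n-1) * n = (n-1) * (n - 1) + (n - 1)" using n by (cases n) auto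
  ultimately show ?thesis
    using card_part_le[OF k] Y(2) by (simp add: charge_def; linarith)
qed

lemma small_part_bounds:
  assumes k: "k \<in> cluster n ` B" and small: "card (part k) + 2 \<le> n"
  shows "n - 1 \<le> charge k"
    and "int (n-1) + 4 + int (card (part k)) * int (n-1) \<le> 2 * int (charge k) + 2 * int (card (cluster n ` B))"
proof -
  define z where "z = card (part k)"
  define m where "m = n - 1"
  have z: "1 \<le> z" "z + 1 \<le> m" using card_part_pos[OF k] small by (auto simp: z_def m_def)
  have part_verts: "part k \<subseteq> dc_verts n" using B_verts by (auto simp: part_def)
  have "2 * z * m + 2 \<le> 2 * card (cube_boundary (cluster_dirs n (fst k)) (part k)) + z * (z + 1)"
    using card_cube_boundary_cluster_dirs[OF n part_verts] card_part_pos[OF k] small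
    by (simp add: z_def m_def)
  moreover have "card (cube_boundary (cluster_dirs n (fst k)) (part k)) \<le> card (F_part k)"
    using cube_boundary_part_subset finite_F_part by (rule card_mono[rotated])
  ultimately have "2 * z * m + 2 \<le> 2 * card (F_part k) + z * (z + 1)" by linarith
  then have "int (2 * z * m + 2) \<le> int (2 * card (F_part k) + z * (z + 1))"
    by (simp only: of_nat_le_iff)
  then have cube: "2 * int z * int m + 2 \<le> 2 * int (card (F_part k)) + int z * (int z + 1)"
    by (simp add: algebra_simps)
  have "z \<le> card (escaped k) + (card (cluster n ` B) - 1)"
    using card_part_le[OF k] by (simp add: z_def)
  moreover have "1 \<le> card (cluster n ` B)"
    using k finite_B by (auto simp: Suc_le_eq card_gt_0_iff)
  ultimately have escape: "int z \<le> int (card (escaped k)) + int (card (cluster n ` B)) - 1"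
    by linarith
  have "(int z - 1) * (int z + 2) \<le> (int z - 1) * (2 * int m)"
    using z by (intro mult_left_mono) auto
  then show "n - 1 \<le> charge k"
    using cube by (simp add: charge_def m_def algebra_simps)
  have "0 \<le> (int z - 1) * (int m - int z)"
    using z by (intro mult_nonneg_nonneg) auto
  then show "int (n-1) + 4 + int (card (part k)) * int (n-1) \<le> 2 * int (charge k) + 2 * int (card (cluster n ` B))"
    unfolding z_def[symmetric] m_def[symmetric] charge_def
    using cube escape by (simp add: algebra_simps; linarith)
qed

theorem card_F_lower_bound:
  assumes large: "n - 1 \<le> card B"
  shows "(n-1) * n + 2 \<le> 2 * card F"
proof (cases "\<exists>k\<in>cluster n ` B. n - 1 \<le> card (part k)")
  case True
  then obtain k where k: "k \<in> cluster n ` B" "n - 1 \<le> card (part k)" by blast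
  have fin: "finite (cluster n ` B)" using finite_B by simp
  have "(\<Sum>k\<in>cluster n ` B - {k}. 1) \<le> (\<Sum>k\<in>cluster n ` B - {k}. charge k)"
    using charge_pos by (intro sum_mono) auto
  then have "charge k + (card (cluster n ` B) - 1) \<le> (\<Sum>k\<in>cluster n ` B. charge k)"
    using k(1) fin by (simp add: sum.remove)
  then have "2 * (charge k + (card (cluster n ` B) - 1)) \<le> 2 * card F"
    using sum_charge_le by simp
  with large_part_bound[OF k] show ?thesis by (rule order_trans)
next
  case False
  then have small: "card (part k) + 2 \<le> n" if "k \<in> cluster n ` B" for k
    using that n by force
  have "(n-1) * (n - 1 + 1) + 2 \<le> 2 * (\<Sum>k\<in>cluster n ` B. charge k)"
  proof (rule sum_charges_lower_bound[where z = "\<lambda>k. card (part k)"])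
    show "cluster n ` B \<noteq> {}" using large n by auto
  qed (use n finite_B small_part_bounds[OF _ small] sum_card_part large in auto)
  then show ?thesis using sum_charge_le n by (simp add: algebra_simps; linarith)
qed

end

section \<open>Components\<close>

lemma reach_in_refl: "reach_in E S x x"
  unfolding reach_in_def by simp

lemma reach_in_step: "x \<in> S \<Longrightarrow> y \<in> S \<Longrightarrow> E x y \<Longrightarrow> reach_in E S x y"
  unfolding reach_in_def by (rule r_into_rtranclp) simp

lemma reach_in_trans: "reach_in E S x y \<Longrightarrow> reach_in E S y z \<Longrightarrow> reach_in E S x z"
  unfolding reach_in_def by (rule rtranclp_trans)

lemma reach_in_sym:
  assumes sym: "\<And>x y. E x y \<Longrightarrow> E y x" and "reach_in E S x y"
  shows "reach_in E S y x"
  using assms(2) unfolding reach_in_def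
proof (induction rule: rtranclp_induct)
  case (step y z)
  then show ?case using sym by (blast intro: converse_rtranclp_into_rtranclp)
qed simp

lemma reach_in_isolated:
  assumes "\<And>w. E x w \<Longrightarrow> w \<notin> S" and "reach_in E S x y"
  shows "y = x"
  using assms(2) unfolding reach_in_def
  by (cases rule: converse_rtranclpE) (use assms(1) in auto)

text \<open>All components but the one of x0 meet the vertices not reachable from x0.\<close>

lemma card_components_in_le:
  assumes E_sym: "\<And>x y. E x y \<Longrightarrow> E y x" and S: "finite S"
  shows "card (components_in E S) \<le> card {y \<in> S. \<not> reach_in E S x0 y} + 1"
proof -
  define C where "C x = {y \<in> S. reach_in E S x y}" for x
  define B where "B = {y \<in> S. \<not> reach_in E S x0 y}"
  have "C x = C x0" if "x \<in> C x0" for x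
  proof -
    have r: "reach_in E S x0 x" using that by (simp add: C_def)
    then have r': "reach_in E S x x0" using E_sym reach_in_sym by metis
    show ?thesis unfolding C_def using reach_in_trans[OF r] reach_in_trans[OF r'] by blast
  qed
  then have "C ` S - {C x0} \<subseteq> C ` B"
    unfolding B_def C_def by blast
  then have "card (C ` S - {C x0}) \<le> card B"
    using S by (metis (no_types, lifting) B_def card_image_le card_mono finite_imageI finite_subset
        le_trans mem_Collect_eq subsetI)
  moreover have "card (C ` S) \<le> card (C ` S - {C x0}) + 1"
    using S by (cases "C x0 \<in> C ` S") (auto simp: card_Diff_singleton_if card_gt_0_iff)
  ultimately show ?thesis by (simp add: components_in_def C_def B_def)
qed

lemma card_components_in_ge_isolated:
  assumes S: "finite S" "W \<subseteq> S" and iso: "\<And>w x. w \<in> W \<Longrightarrow> E w x \<Longrightarrow> x \<notin> S"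
    and v: "v \<in> S" "v \<notin> W"
  shows "card W + 1 \<le> card (components_in E S)"
proof -
  define C where "C x = {y \<in> S. reach_in E S x y}" for x
  have singleton: "C w = {w}" if "w \<in> W" for w
  proof -
    have "y = w" if "reach_in E S w y" for y
      using reach_in_isolated[where E=E and S=S and x=w] iso \<open>w \<in> W\<close> that by blast
    then show ?thesis using reach_in_refl[of E S w] that S(2) by (auto simp: C_def)
  qed
  have "insert (C v) ((\<lambda>w. {w}) ` W) \<subseteq> components_in E S"
    using singleton[symmetric] v S(2) by (auto simp: components_in_def C_def[abs_def])
  moreover have "C v \<notin> (\<lambda>w. {w}) ` W"
  proof
    assume "C v \<in> (\<lambda>w. {w}) ` W"
    moreover have "v \<in> C v" using v reach_in_refl by (simp add: C_def)
    ultimately show False using v by auto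
  qed
  moreover have "finite W" using S finite_subset by blast
  moreover have "finite (components_in E S)" using S by (simp add: components_in_def)
  ultimately show ?thesis
    by (metis card_image card_insert_disjoint card_mono finite_imageI inj_on_def
        singleton_inject Suc_eq_plus1)
qed

lemma reach_in_cluster:
  assumes n: "n \<ge> 2" and uv: "u \<in> dc_verts n" "v \<in> dc_verts n" "cluster n u = cluster n v"
    and S: "\<And>w. w \<in> dc_verts n \<Longrightarrow> cluster n w = cluster n v \<Longrightarrow> w \<in> S"
  shows "reach_in (dc_adj n) S u v"
  using uv
proof (induction "card {j. j < 2*n-1 \<and> u ! j \<noteq> v ! j}" arbitrary: u rule: less_induct)
  case (less u)
  have lu: "length u = 2*n-1" and lv: "length v = 2*n-1" using less.prems by (auto simp: dc_verts_def)
  show ?case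
  proof (cases "\<exists>j < 2*n-1. u ! j \<noteq> v ! j")
    case False
    then have "u = v" using lu lv by (intro nth_equalityI) auto
    then show ?thesis by (simp add: reach_in_refl)
  next
    case True
    then obtain j where j: "j < 2*n-1" "u ! j \<noteq> v ! j" by blast
    then have dir: "j \<in> cluster_dirs n (u ! (2*n-2))"
      using nth_eq_if_cluster_eq[OF n lu lv less.prems(3)] by blast
    define u' where "u' = flip_bit j u"
    have u': "u' \<in> dc_verts n" "cluster n u' = cluster n v"
      using lu cluster_flip_bit(1)[OF n lu dir] less.prems(3) by (auto simp: u'_def dc_verts_def)
    have "{i. i < 2*n-1 \<and> u' ! i \<noteq> v ! i} = {i. i < 2*n-1 \<and> u ! i \<noteq> v ! i} - {j}"
      using lu j by (auto simp: u'_def nth_flip_bit)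
    then have "card {i. i < 2*n-1 \<and> u' ! i \<noteq> v ! i} < card {i. i < 2*n-1 \<and> u ! i \<noteq> v ! i}"
      using j by (simp only:) (rule card_Diff1_less, auto)
    then have "reach_in (dc_adj n) S u' v" using less.hyps u' less.prems(2) by simp
    have "dc_adj n u u'" using dc_adj_iff[OF n] lu dir by (auto simp: u'_def)
    then have "reach_in (dc_adj n) S u u'" using S less.prems u' by (intro reach_in_step) auto
    then show ?thesis using \<open>reach_in (dc_adj n) S u' v\<close> by (rule reach_in_trans)
  qed
qed

lemma exists_cluster_avoiding:
  assumes F: "finite F" "card F < 2 ^ (n-1)"
  shows "\<exists>l. length l = n - 1 \<and> (c, l) \<notin> cluster n ` F"
proof (rule ccontr)
  assume none: "\<not> ?thesis"
  have sub: "{l :: bool list. set l \<subseteq> UNIV \<and> length l = n - 1} \<subseteq> snd ` cluster n ` F"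
  proof
    fix l :: "bool list" assume "l \<in> {l. set l \<subseteq> UNIV \<and> length l = n - 1}"
    then have "(c, l) \<in> cluster n ` F" using none by auto
    then show "l \<in> snd ` cluster n ` F" by (metis image_eqI snd_conv)
  qed
  have "card {l :: bool list. set l \<subseteq> UNIV \<and> length l = n - 1} = 2 ^ (n-1)"
    using card_lists_length_eq[of "UNIV :: bool set" "n-1"] by simp
  moreover have "card (snd ` cluster n ` F) \<le> card F"
    using card_image_le[OF F(1), of "cluster n"] card_image_le[of "cluster n ` F" snd] F(1) by simp
  ultimately have "2 ^ (n-1) \<le> card F"
    using card_mono[OF _ sub] F(1) by (metis finite_imageI le_trans)
  then show False using F(2) by simp
qed

lemma reach_in_cluster_avoiding:
  assumes n: "n \<ge> 2" and ab: "a \<in> dc_verts n" "b \<in> dc_verts n" "cluster n a = cluster n b"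
    and free: "cluster n b \<notin> cluster n ` F"
  shows "reach_in (dc_adj n) (dc_verts n - F) a b"
proof (rule reach_in_cluster[OF n ab])
  fix w assume "w \<in> dc_verts n" "cluster n w = cluster n b"
  then show "w \<in> dc_verts n - F" using free by (auto simp: image_iff)
qed

lemma reach_in_cross_avoiding:
  assumes n: "n \<ge> 2" and xy: "length x = n - 1" "length y = n - 1"
    and free: "(c, if c then x else y) \<notin> cluster n ` F" "(\<not> c, if c then y else x) \<notin> cluster n ` F"
  shows "reach_in (dc_adj n) (dc_verts n - F) (x @ y @ [c]) (x @ y @ [\<not> c])"
proof (rule reach_in_step)
  note v = cluster_append[OF n xy]
  show "x @ y @ [c] \<in> dc_verts n - F" "x @ y @ [\<not> c] \<in> dc_verts n - F"
    using free v(1)[of c] v(1)[of "\<not> c"] v(2)[of c] v(2)[of "\<not> c"]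
    by (cases c; auto simp: image_iff)+
  show "dc_adj n (x @ y @ [c]) (x @ y @ [\<not> c])"
    using v(3)[of c] v(2)[of c] dc_adj_iff[OF n] by (simp add: dc_verts_def)
qed

text \<open>If F misses a cluster of each class, all clusters missed by F lie in one
  component: each is joined by a cross edge to one of the two chosen clusters.\<close>

lemma reach_in_clusters_avoiding:
  assumes n: "n \<ge> 2" and F: "finite F" "card F < 2 ^ (n-1)"
  obtains v0 where "\<And>w. w \<in> dc_verts n \<Longrightarrow> cluster n w \<notin> cluster n ` F \<Longrightarrow> reach_in (dc_adj n) (dc_verts n - F) v0 w"
proof -
  let ?R = "reach_in (dc_adj n) (dc_verts n - F)"
  obtain x0 where x0: "length x0 = n - 1" "(True, x0) \<notin> cluster n ` F"
    using exists_cluster_avoiding[OF F] by blast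
  obtain y0 where y0: "length y0 = n - 1" "(False, y0) \<notin> cluster n ` F"
    using exists_cluster_avoiding[OF F] by blast
  note within = reach_in_cluster_avoiding[OF n] and across = reach_in_cross_avoiding[OF n]
  have "?R (x0 @ y0 @ [False]) w" if w: "w \<in> dc_verts n" "cluster n w \<notin> cluster n ` F" for w
  proof (cases "w ! (2*n-2)")
    case False
    define y where "y = take (n-1) (drop (n-1) w)"
    have y: "length y = n - 1" "cluster n w = (False, y)"
      using w n False by (auto simp: y_def cluster_def dc_verts_def)
    note v = cluster_append[OF n x0(1) y0(1)] cluster_append[OF n x0(1) y(1)]
    have "?R (x0 @ y0 @ [False]) (x0 @ y0 @ [True])" using across[OF x0(1) y0(1), of False] x0 y0 by simp
    moreover have "?R (x0 @ y0 @ [True]) (x0 @ y @ [True])" using within v x0 by simp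
    moreover have "?R (x0 @ y @ [True]) (x0 @ y @ [False])" using across[OF x0(1) y(1), of True] x0 y w by simp
    moreover have "?R (x0 @ y @ [False]) w" using within v w y by simp
    ultimately show ?thesis by (meson reach_in_trans)
  next
    case True
    define x where "x = take (n-1) w"
    have x: "length x = n - 1" "cluster n w = (True, x)"
      using w n True by (auto simp: x_def cluster_def dc_verts_def)
    note v = cluster_append[OF n x0(1) y0(1)] cluster_append[OF n x(1) y0(1)]
    have "?R (x0 @ y0 @ [False]) (x @ y0 @ [False])" using within v y0 by simp
    moreover have "?R (x @ y0 @ [False]) (x @ y0 @ [True])" using across[OF x(1) y0(1), of False] x y0 w by simp
    moreover have "?R (x @ y0 @ [True]) w" using within v w x by simp
    ultimately show ?thesis by (meson reach_in_trans)
  qed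
  then show ?thesis by (rule that)
qed

section \<open>The lower bound\<close>

lemma mult_Suc_add_two_le_two_power: "m * (m + 1) + 2 \<le> 2 * 2 ^ m"
proof (induction m)
  case (Suc m)
  have "Suc m \<le> 2 ^ m" using less_exp[of m] by (simp add: Suc_le_eq)
  then show ?case using Suc by (simp add: algebra_simps)
qed simp

lemma two_mul_le_pronic_add: "2 * r * n \<le> n * (n - 1) + r * (r + 1 :: nat)"
proof -
  have "0 \<le> (int n - int r) * (int n - int r - 1)"
    by (cases "int n - int r \<le> 0") (auto intro: mult_nonpos_nonpos)
  then have "int (2 * r * n + n) \<le> int (n * n + r * (r + 1))"
    by (simp add: algebra_simps)
  then have "2 * r * n + n \<le> n * n + r * (r + 1)" by (simp only: of_nat_le_iff)
  moreover have "n * n = n * (n - 1) + n" by (cases n) auto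
  ultimately show ?thesis by linarith
qed

lemma cut_bound_mono:
  fixes r b n :: nat
  assumes "r \<le> b" "b + r + 1 \<le> 2 * n"
  shows "2 * r * n + b * (b + 1) \<le> 2 * b * n + r * (r + 1)"
proof -
  have "0 \<le> (int b - int r) * (2 * int n - int b - int r - 1)"
    using assms by (intro mult_nonneg_nonneg) auto
  then have "int (2 * r * n + b * (b + 1)) \<le> int (2 * b * n + r * (r + 1))"
    by (simp add: algebra_simps)
  then show ?thesis by (simp only: of_nat_le_iff)
qed

lemma dc_enclosed_unreachable:
  assumes n: "n \<ge> 2" and F: "finite F"
    and main: "\<And>w. w \<in> dc_verts n \<Longrightarrow> cluster n w \<notin> cluster n ` F \<Longrightarrow> reach_in (dc_adj n) (dc_verts n - F) v0 w"
  shows "dc_enclosed n F {y \<in> dc_verts n - F. \<not> reach_in (dc_adj n) (dc_verts n - F) v0 y}"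
    (is "dc_enclosed n F ?B")
proof
  show "dc_boundary n ?B \<subseteq> F"
  proof
    fix w assume "w \<in> dc_boundary n ?B"
    then obtain v where v: "v \<in> ?B" "dc_adj n v w" "w \<notin> ?B" by (auto simp: dc_boundary_def)
    show "w \<in> F"
    proof (rule ccontr)
      assume "w \<notin> F"
      then have w: "w \<in> dc_verts n - F" using v(2) dc_adj_verts by blast
      then have "reach_in (dc_adj n) (dc_verts n - F) v0 w" using v(3) by simp
      moreover have "reach_in (dc_adj n) (dc_verts n - F) w v"
        using w v(1,2) dc_adj_sym by (intro reach_in_step) auto
      ultimately have "reach_in (dc_adj n) (dc_verts n - F) v0 v" by (rule reach_in_trans)
      then show False using v(1) by simp
    qed
  qed
  show "cluster n ` ?B \<subseteq> cluster n ` F" using main by blast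
qed (use n F in auto)

theorem dc_comp_cut_lower_bound:
  assumes n: "n \<ge> 2" and r: "1 \<le> r" "r \<le> n - 1" and F: "F \<subseteq> dc_verts n"
    and comps: "r + 1 \<le> card (components_in (dc_adj n) (dc_verts n - F))"
  shows "2 * r * n + 2 \<le> 2 * card F + r * (r + 1)"
proof (rule ccontr)
  assume small: "\<not> ?thesis"
  have fin: "finite F" using F finite_dc_verts finite_subset by blast
  have "2 * card F < n * (n - 1) + 2" using small two_mul_le_pronic_add[of r n] by linarith
  moreover have "(n - 1) * (n - 1 + 1) + 2 \<le> 2 * 2 ^ (n - 1)" by (rule mult_Suc_add_two_le_two_power)
  ultimately have "card F < 2 ^ (n - 1)" using n by (simp add: mult.commute)
  then obtain v0 where main: "\<And>w. w \<in> dc_verts n \<Longrightarrow> cluster n w \<notin> cluster n ` F \<Longrightarrow>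
      reach_in (dc_adj n) (dc_verts n - F) v0 w"
    using reach_in_clusters_avoiding[OF n fin] by blast
  define B where "B = {y \<in> dc_verts n - F. \<not> reach_in (dc_adj n) (dc_verts n - F) v0 y}"
  have "r \<le> card B"
    using comps card_components_in_le[of "dc_adj n" "dc_verts n - F" v0] dc_adj_sym finite_dc_verts
    by (simp add: B_def)
  interpret dc_enclosed n F B
    unfolding B_def using n fin main by (rule dc_enclosed_unreachable)
  show False
  proof (cases "n - 1 \<le> card B")
    case True
    then have "(n - 1) * n + 2 \<le> 2 * card F" by (rule card_F_lower_bound)
    then show False using small two_mul_le_pronic_add[of r n] by (simp add: mult.commute)
  next
    case False
    have B_verts: "B \<subseteq> dc_verts n" by (auto simp: B_def)
    have "2 * card B * n + 2 \<le> 2 * card (dc_boundary n B) + card B * (card B + 1)"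
      using card_dc_boundary_small[OF n B_verts] \<open>r \<le> card B\<close> False r n by simp
    moreover have "card (dc_boundary n B) \<le> card F"
      using boundary_subset fin by (rule card_mono[rotated])
    moreover have "2 * r * n + card B * (card B + 1) \<le> 2 * card B * n + r * (r + 1)"
      using \<open>r \<le> card B\<close> False by (intro cut_bound_mono) auto
    ultimately show False using small by linarith
  qed
qed

section \<open>The upper bound\<close>

definition unit_vertex :: "nat \<Rightarrow> nat \<Rightarrow> bool list" where
  "unit_vertex n i = flip_bit i (replicate (2*n-1) False)"

definition unit_cut :: "nat \<Rightarrow> nat \<Rightarrow> bool list set" where
  "unit_cut n r = (\<Union>i<r. {x. dc_adj n (unit_vertex n i) x})"

lemma length_unit_vertex [simp]: "length (unit_vertex n i) = 2*n-1"
  by (simp add: unit_vertex_def)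

lemma nth_flip_bit_unit_vertex:
  "i < 2*n-1 \<Longrightarrow> j < 2*n-1 \<Longrightarrow> p < 2*n-1 \<Longrightarrow> flip_bit j (unit_vertex n i) ! p = ((p = i) \<noteq> (p = j))"
  by (auto simp: unit_vertex_def nth_flip_bit)

lemma nth_unit_vertex: "i < 2*n-1 \<Longrightarrow> p < 2*n-1 \<Longrightarrow> unit_vertex n i ! p = (p = i)"
  by (simp add: unit_vertex_def nth_flip_bit)

lemma unit_vertex_neq_flip_bit:
  assumes "i < 2*n-1" "j < 2*n-1" "k < 2*n-1"
  shows "unit_vertex n k \<noteq> flip_bit j (unit_vertex n i)"
proof
  assume eq: "unit_vertex n k = flip_bit j (unit_vertex n i)"
  have "unit_vertex n k ! p = flip_bit j (unit_vertex n i) ! p" for p using eq by simp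
  from this[of i] this[of j] this[of k] show False
    using assms by (auto simp: nth_unit_vertex nth_flip_bit_unit_vertex)
qed

lemma adj_unit_vertex:
  assumes n: "n \<ge> 2" and i: "i < n - 1" and adj: "dc_adj n (unit_vertex n i) x"
  shows "x = flip_bit (2*n-2) (unit_vertex n i) \<or> (\<exists>j<n-1. x = flip_bit j (unit_vertex n i))"
proof -
  have "unit_vertex n i ! (2*n-2) = False" using i n by (simp add: nth_unit_vertex)
  then show ?thesis using adj dc_adj_iff[OF n] by (auto simp: cluster_dirs_def)
qed

lemma unit_cut_bit:
  assumes n: "n \<ge> 2" and r: "r \<le> n - 1" and x: "x \<in> unit_cut n r"
  shows "x ! (2*n-3) = False"
proof -
  obtain i where i: "i < r" "dc_adj n (unit_vertex n i) x" using x by (auto simp: unit_cut_def)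
  then show ?thesis
    using adj_unit_vertex[OF n _ i(2)] r n by (auto simp: nth_flip_bit_unit_vertex)
qed

lemma unit_vertex_notin_unit_cut:
  assumes n: "n \<ge> 2" and r: "r \<le> n - 1" and k: "k < r"
  shows "unit_vertex n k \<notin> unit_cut n r"
proof
  assume "unit_vertex n k \<in> unit_cut n r"
  then obtain i where i: "i < r" "dc_adj n (unit_vertex n i) (unit_vertex n k)" by (auto simp: unit_cut_def)
  have ik: "i < 2*n-1" "k < 2*n-1" using i k r by linarith+
  have "i < n - 1" using i r by linarith
  then consider "unit_vertex n k = flip_bit (2*n-2) (unit_vertex n i)"
    | j where "j < n - 1" "unit_vertex n k = flip_bit j (unit_vertex n i)"
    using adj_unit_vertex[OF n _ i(2)] by blast
  then show False
  proof cases
    case 1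
    then show False using unit_vertex_neq_flip_bit[OF ik(1) _ ik(2)] n by simp
  next
    case (2 j)
    then show False using unit_vertex_neq_flip_bit[OF ik(1) _ ik(2), of j] by simp
  qed
qed

lemma inj_on_unit_vertex: "inj_on (unit_vertex n) {..<2*n-1}"
  by (rule inj_onI) (simp add: unit_vertex_def flip_bit_eq_iff)

text \<open>The neighbour flip_bit j (unit_vertex n i) with j < i equals flip_bit i (unit_vertex n j),
  so it is covered by the pair (j, i); for j = i it is the zero vertex.\<close>

lemma unit_cut_subset:
  assumes n: "n \<ge> 2" and r: "r \<le> n - 1"
  shows "unit_cut n r \<subseteq> insert (replicate (2*n-1) False)
    ((\<lambda>i. flip_bit (2*n-2) (unit_vertex n i)) ` {..<r}
      \<union> (\<lambda>(i, j). flip_bit j (unit_vertex n i)) ` (SIGMA i:{..<r}. {i<..<n-1}))"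
    (is "_ \<subseteq> ?U")
proof
  fix x assume "x \<in> unit_cut n r"
  then obtain i where i: "i < r" "dc_adj n (unit_vertex n i) x" by (auto simp: unit_cut_def)
  have "i < n - 1" using i r by linarith
  then consider "x = flip_bit (2*n-2) (unit_vertex n i)" | j where "j < n - 1" "x = flip_bit j (unit_vertex n i)"
    using adj_unit_vertex[OF n _ i(2)] by blast
  then show "x \<in> ?U"
  proof cases
    case 1
    then show ?thesis using i by auto
  next
    case (2 j)
    have ij: "i < 2*n-1" "j < 2*n-1" using \<open>i < n - 1\<close> \<open>j < n - 1\<close> by linarith+
    consider "j = i" | "i < j" | "j < i" by linarith
    then show ?thesis
    proof cases
      case 1
      then show ?thesis using 2 ij by (simp add: unit_vertex_def)
    next
      case 3
      then have "x = flip_bit i (unit_vertex n j)" "(j, i) \<in> (SIGMA i:{..<r}. {i<..<n-1})"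
        using 2 ij i \<open>i < n - 1\<close> by (auto simp: unit_vertex_def flip_bit_commute)
      then show ?thesis by force
    qed (use 2 i in force)
  qed
qed

lemma sum_minus_index: "r \<le> n - 1 \<Longrightarrow> 2 * (\<Sum>i<r. n - 2 - i) + r * (r + 3) = 2 * r * (n::nat)"
proof (induction r)
  case (Suc r)
  then have IH: "2 * (\<Sum>i<r. n - 2 - i) + r * (r + 3) = 2 * r * n" by simp
  define d where "d = n - (r + 2)"
  have d: "n = r + 2 + d" using Suc.prems by (simp add: d_def)
  have "(\<Sum>i<Suc r. n - 2 - i) = (\<Sum>i<r. n - 2 - i) + d" using d by simp
  then show ?case using IH unfolding d by (simp add: algebra_simps)
qed simp

lemma card_unit_cut_le:
  assumes n: "n \<ge> 2" and r: "r \<le> n - 1"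
  shows "2 * card (unit_cut n r) + r * (r + 1) \<le> 2 * r * n + 2"
proof -
  let ?pairs = "SIGMA i:{..<r}. {i<..<n-1}"
  have "card (unit_cut n r) \<le> card (insert (replicate (2*n-1) False)
      ((\<lambda>i. flip_bit (2*n-2) (unit_vertex n i)) ` {..<r} \<union> (\<lambda>(i, j). flip_bit j (unit_vertex n i)) ` ?pairs))"
    using unit_cut_subset[OF n r] by (rule card_mono[rotated]) simp
  also have "\<dots> \<le> 1 + (r + card ?pairs)"
    using card_Un_le[of "(\<lambda>i. flip_bit (2*n-2) (unit_vertex n i)) ` {..<r}"
        "(\<lambda>(i, j). flip_bit j (unit_vertex n i)) ` ?pairs"]
      card_image_le[of "{..<r}" "\<lambda>i. flip_bit (2*n-2) (unit_vertex n i)"]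
      card_image_le[of ?pairs "\<lambda>(i, j). flip_bit j (unit_vertex n i)"]
    by (simp add: card_insert_if; linarith)
  also have "card ?pairs = (\<Sum>i<r. n - 2 - i)"
    by (simp add: card_SigmaI)
  finally show ?thesis using sum_minus_index[OF r] by (simp add: algebra_simps)
qed

theorem is_comp_cut_unit_cut:
  assumes n: "n \<ge> 2" and r: "r \<le> n - 1"
  shows "is_comp_cut (dc_verts n) (dc_adj n) (r + 1) (unit_cut n r)"
proof -
  define W where "W = unit_vertex n ` {..<r}"
  define ones where "ones = replicate (2*n-1) True"
  have pos: "2*n-3 < 2*n-1" using n by linarith
  have W: "W \<subseteq> dc_verts n - unit_cut n r"
    using unit_vertex_notin_unit_cut[OF n r] by (auto simp: W_def dc_verts_def)
  have ones_bit: "ones ! (2*n-3)" using pos by (simp add: ones_def)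
  have ones: "ones \<in> dc_verts n - unit_cut n r"
    using unit_cut_bit[OF n r] ones_bit by (auto simp: ones_def dc_verts_def)
  have "ones \<notin> W"
  proof
    assume "ones \<in> W"
    then obtain k where "k < r" "ones = unit_vertex n k" by (auto simp: W_def)
    moreover have "k < 2*n-1" "k \<noteq> 2*n-3" using \<open>k < r\<close> r by linarith+
    ultimately show False using ones_bit nth_unit_vertex[of k n "2*n-3"] pos by simp
  qed
  have "card W = r"
    using inj_on_subset[OF inj_on_unit_vertex, of "{..<r}" n] r by (simp add: W_def card_image)
  moreover have "card W + 1 \<le> card (components_in (dc_adj n) (dc_verts n - unit_cut n r))"
    using W ones \<open>ones \<notin> W\<close> finite_dc_verts
    by (intro card_components_in_ge_isolated) (auto simp: W_def unit_cut_def)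
  moreover have "unit_cut n r \<subseteq> dc_verts n" by (auto simp: unit_cut_def dc_adj_def)
  ultimately show ?thesis
    using finite_dc_verts by (simp add: is_comp_cut_def components_in_def)
qed

theorem mainTheorem8:
  fixes n r :: nat
  assumes "n \<ge> 2" and "1 \<le> r" and "r \<le> n - 1"
  shows "int (comp_conn (dc_verts n) (dc_adj n) (r + 1)) = int (r * n) - int (r * (r + 1) div 2) + 1"
proof -
  have lower: "2 * r * n + 2 \<le> 2 * card F + r * (r + 1)"
    if "is_comp_cut (dc_verts n) (dc_adj n) (r + 1) F" for F
    using dc_comp_cut_lower_bound[OF assms] that by (simp add: is_comp_cut_def)
  note upper = is_comp_cut_unit_cut[OF assms(1,3)] card_unit_cut_le[OF assms(1,3)]
  have "comp_conn (dc_verts n) (dc_adj n) (r + 1) = card (unit_cut n r)"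
    unfolding comp_conn_def
  proof (rule Least_equality)
    fix k assume "\<exists>F. is_comp_cut (dc_verts n) (dc_adj n) (r + 1) F \<and> card F = k"
    then show "card (unit_cut n r) \<le> k" using lower upper(2) by fastforce
  qed (use upper(1) in blast)
  moreover obtain q where q: "r * (r + 1) = 2 * q"
    using evenE[of "r * (r + 1)"] by auto
  then have "card (unit_cut n r) + q = r * n + 1"
    using lower[OF upper(1)] upper(2) by linarith
  then have "int (card (unit_cut n r)) = int (r * n) - int q + 1"
    using arg_cong[of _ _ int] by fastforce
  ultimately show ?thesis using q by simp
qed

end
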